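(* Fix $\epsilon>0$ and $n\in\mathbb{N}$. There is no constant $c$ such that $QK^{\epsilon}(|\sigma\rangle\langle\sigma|)\ge K(\sigma)-c$ for all unit vectors $\sigma\in\mathbb{C}^{2^n}_{alg}$. In particular, it is not the case that $QK^{\epsilon}(|\sigma\rangle\langle\sigma|)$ and $K(\sigma)$ agree up to an additive constant for all unit vectors $\sigma\in\mathbb{C}^{2^n}_{alg}$.
   Context: Let $\mathbb{U}$ be a fixed universal prefix-free Turing machine and $K$ the associated prefix-free Kolmogorov complexity. Finite sets of vectors with complex algebraic entries (and single such vectors) are coded by natural numbers via a fixed canonical effective indexing; for a vector $\sigma$ with complex algebraic entries, $K(\sigma)$ is the prefix-free complexity of its code. $\mathbb{U}(\sigma)\downarrow=F$ means that $\mathbb{U}$ on input $\sigma$ halts and outputs the code of $F$. $\mathbb{C}^{2^n}_{alg}$ denotes the set of vectors in $\mathbb{C}^{2^n}$ all of whose entries are complex algebraic numbers. All logarithms are base 2. For a density matrix $\tau$ on $\mathbb{C}^{2^{n}}$ write $|\tau|=n$. For $\epsilon>0$ define $QK^{\epsilon}(\tau)=\inf\{|\sigma|+\log|F| : \mathbb{U}(\sigma)\downarrow=F,\ F \text{ an orthonormal subset of } \mathbb{C}^{2^{|\tau|}}_{alg},\ \sum_{v\in F}\langle v|\tau|v\rangle>\epsilon\}$, with $\inf\emptyset=\infty$. *)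

theory Defs
  imports "HOL-Computational_Algebra.Polynomial" "HOL-Library.Extended_Real"
begin

datatype recf = Zf | Sf | Proj nat | Comp recf "recf list" | Prec recf recf | Minf recf

inductive eval_recf :: "recf \<Rightarrow> nat list \<Rightarrow> nat \<Rightarrow> bool" where
  ev_zero: "eval_recf Zf xs 0"
| ev_succ: "eval_recf Sf (x # xs) (Suc x)"
| ev_proj: "i < length xs \<Longrightarrow> eval_recf (Proj i) xs (xs ! i)"
| ev_comp: "list_all2 (\<lambda>g y. eval_recf g xs y) gs ys \<Longrightarrow> eval_recf f ys z
            \<Longrightarrow> eval_recf (Comp f gs) xs z"
| ev_prec0: "eval_recf f xs y \<Longrightarrow> eval_recf (Prec f g) (0 # xs) y"
| ev_precS: "eval_recf (Prec f g) (k # xs) y \<Longrightarrow> eval_recf g (k # y # xs) z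
            \<Longrightarrow> eval_recf (Prec f g) (Suc k # xs) z"
| ev_min: "eval_recf f (k # xs) 0 \<Longrightarrow> (\<forall>i<k. \<exists>y. y > 0 \<and> eval_recf f (i # xs) y)
            \<Longrightarrow> eval_recf (Minf f) xs k"

definition partrec :: "(nat \<Rightarrow> nat option) \<Rightarrow> bool" where
  "partrec g \<longleftrightarrow> (\<exists>r. \<forall>x y. eval_recf r [x] y \<longleftrightarrow> g x = Some y)"

text \<open>Standard bijection between binary strings and naturals.\<close>
fun bin_code :: "bool list \<Rightarrow> nat" where
  "bin_code [] = 0"
| "bin_code (b # bs) = 2 * bin_code bs + (if b then 2 else 1)"

definition computable_machine :: "(bool list \<Rightarrow> nat option) \<Rightarrow> bool" where
  "computable_machine M \<longleftrightarrow> (\<exists>g. partrec g \<and> (\<forall>p. M p = g (bin_code p)))"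

definition prefix_free_machine :: "(bool list \<Rightarrow> nat option) \<Rightarrow> bool" where
  "prefix_free_machine M \<longleftrightarrow>
     (\<forall>p q. M p \<noteq> None \<longrightarrow> M q \<noteq> None \<longrightarrow> (\<exists>r. q = p @ r) \<longrightarrow> p = q)"

definition universal_pf_machine :: "(bool list \<Rightarrow> nat option) \<Rightarrow> bool" where
  "universal_pf_machine U \<longleftrightarrow> prefix_free_machine U \<and> computable_machine U \<and>
     (\<forall>M. prefix_free_machine M \<and> computable_machine M \<longrightarrow> (\<exists>\<rho>. \<forall>x. U (\<rho> @ x) = M x))"

definition alg_vec :: "nat \<Rightarrow> complex list \<Rightarrow> bool" where
  "alg_vec n v \<longleftrightarrow> length v = 2 ^ n \<and> (\<forall>x\<in>set v. algebraic x)"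

definition cinner :: "complex list \<Rightarrow> complex list \<Rightarrow> complex" where
  "cinner v w = (\<Sum>i<length v. cnj (v ! i) * w ! i)"

definition orthonormal_set :: "complex list set \<Rightarrow> bool" where
  "orthonormal_set F \<longleftrightarrow> (\<forall>v\<in>F. \<forall>w\<in>F. cinner v w = (if v = w then 1 else 0))"

definition qform :: "(nat \<Rightarrow> nat \<Rightarrow> complex) \<Rightarrow> complex list \<Rightarrow> complex" where
  "qform \<tau> v = (\<Sum>i<length v. \<Sum>j<length v. cnj (v ! i) * \<tau> i j * v ! j)"

definition outer :: "complex list \<Rightarrow> nat \<Rightarrow> nat \<Rightarrow> complex" where
  "outer \<sigma> i j = \<sigma> ! i * cnj (\<sigma> ! j)"

definition Kc :: "(bool list \<Rightarrow> nat option) \<Rightarrow> (complex list \<Rightarrow> nat) \<Rightarrow> complex list \<Rightarrow> ereal" where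
  "Kc U codeV \<sigma> = (INF p\<in>{p. U p = Some (codeV \<sigma>)}. ereal (real (length p)))"

definition QK :: "(bool list \<Rightarrow> nat option) \<Rightarrow> (complex list set \<Rightarrow> nat) \<Rightarrow> real \<Rightarrow> nat
                  \<Rightarrow> (nat \<Rightarrow> nat \<Rightarrow> complex) \<Rightarrow> ereal" where
  "QK U codeF \<epsilon> n \<tau> =
     (INF pF\<in>{(p, F). U p = Some (codeF F) \<and> finite F \<and> F \<subseteq> {v. alg_vec n v}
                     \<and> orthonormal_set F \<and> Re (\<Sum>v\<in>F. qform \<tau> v) > \<epsilon>}.
        ereal (real (length (fst pF)) + log 2 (real (card (snd pF)))))"

end

theory Submission imports Defs begin

text \<open>QK is bounded on pure states: the standard basis is one fixed finite orthonormal set, of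
  total weight 1 > \<epsilon> for every unit vector, and a universal machine prints its code from some fixed
  program. K is unbounded: the unit algebraic vectors form an infinite set (already the first
  coordinate can range over the rational points of the unit circle), codeV is injective on them,
  and only finitely many programs have bounded length.\<close>

fun const_recf :: "nat \<Rightarrow> recf" where
  "const_recf 0 = Zf"
| "const_recf (Suc k) = Comp Sf [const_recf k]"

inductive_cases eval_recf_ZfE: "eval_recf Zf xs y"
inductive_cases eval_recf_SfE: "eval_recf Sf xs y"
inductive_cases eval_recf_ProjE: "eval_recf (Proj i) xs y"
inductive_cases eval_recf_CompE: "eval_recf (Comp f gs) xs y"
inductive_cases eval_recf_MinfE: "eval_recf (Minf f) xs y"

lemma eval_recf_const_recf: "eval_recf (const_recf k) xs y \<longleftrightarrow> y = k"
proof (induction k arbitrary: y)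
  case 0
  show ?case by (auto elim: eval_recf_ZfE intro: ev_zero)
next
  case (Suc k)
  show ?case
  proof
    assume "eval_recf (const_recf (Suc k)) xs y"
    then obtain ys where "list_all2 (\<lambda>g y. eval_recf g xs y) [const_recf k] ys" "eval_recf Sf ys y"
      by (auto elim: eval_recf_CompE)
    then show "y = Suc k" using Suc.IH by (auto elim!: eval_recf_SfE simp: list_all2_Cons1)
  next
    assume "y = Suc k"
    moreover have "list_all2 (\<lambda>g y. eval_recf g xs y) [const_recf k] [k]" using Suc.IH by simp
    ultimately show "eval_recf (const_recf (Suc k)) xs y" by (auto intro: ev_comp ev_succ)
  qed
qed

definition zero_test_recf :: recf where
  "zero_test_recf = Minf (Proj 1)"

lemma eval_recf_zero_test_recf: "eval_recf zero_test_recf [x] y \<longleftrightarrow> x = 0 \<and> y = 0"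
proof
  assume "eval_recf zero_test_recf [x] y"
  then have found: "eval_recf (Proj 1) [y, x] 0"
    and below: "\<forall>i<y. \<exists>z. z > 0 \<and> eval_recf (Proj 1) [i, x] z"
    unfolding zero_test_recf_def by (auto elim: eval_recf_MinfE)
  from found have "x = 0" by (auto elim: eval_recf_ProjE)
  moreover from below \<open>x = 0\<close> have "y = 0"
    by (metis eval_recf_ProjE less_irrefl neq0_conv nth_Cons_0 nth_Cons_Suc One_nat_def)
  ultimately show "x = 0 \<and> y = 0" ..
next
  assume "x = 0 \<and> y = 0"
  then show "eval_recf zero_test_recf [x] y"
    unfolding zero_test_recf_def using ev_min[of "Proj 1" 0 "[0]"] ev_proj[of 1 "[0, 0]"] by simp
qed

lemma partrec_const_at_zero: "partrec (\<lambda>x. if x = 0 then Some k else None)"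
proof -
  have "eval_recf (Comp (const_recf k) [zero_test_recf]) [x] y \<longleftrightarrow> x = 0 \<and> y = k" for x y
  proof
    assume "eval_recf (Comp (const_recf k) [zero_test_recf]) [x] y"
    then obtain ys where "list_all2 (\<lambda>g y. eval_recf g [x] y) [zero_test_recf] ys"
      "eval_recf (const_recf k) ys y"
      by (auto elim: eval_recf_CompE)
    then show "x = 0 \<and> y = k"
      by (auto simp: list_all2_Cons1 eval_recf_zero_test_recf eval_recf_const_recf)
  next
    assume "x = 0 \<and> y = k"
    then show "eval_recf (Comp (const_recf k) [zero_test_recf]) [x] y"
      by (auto intro!: ev_comp[where ys = "[0]"] simp: eval_recf_zero_test_recf eval_recf_const_recf)
  qed
  then show ?thesis
    unfolding partrec_def by (intro exI[of _ "Comp (const_recf k) [zero_test_recf]"]) auto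
qed

lemma bin_code_eq_0_iff: "bin_code p = 0 \<longleftrightarrow> p = []"
  by (cases p) auto

lemma universal_pf_machine_outputs:
  assumes "universal_pf_machine U"
  obtains p where "U p = Some k"
proof -
  define M where "M = (\<lambda>p. if bin_code p = 0 then Some k else None)"
  have "computable_machine M"
    unfolding computable_machine_def M_def using partrec_const_at_zero by blast
  moreover have "prefix_free_machine M"
    unfolding prefix_free_machine_def M_def by (simp add: bin_code_eq_0_iff)
  ultimately obtain \<rho> where "\<forall>x. U (\<rho> @ x) = M x"
    using assms unfolding universal_pf_machine_def by blast
  then have "U \<rho> = Some k" by (metis append_Nil2 M_def bin_code.simps(1))
  then show thesis by (rule that)
qed

lemma Kc_le_imp_short_program:
  assumes "Kc U codeV \<sigma> \<le> ereal R"
  obtains p where "U p = Some (codeV \<sigma>)" "length p \<le> nat \<lfloor>R\<rfloor>"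
proof (rule ccontr)
  assume "\<not> thesis"
  with that have "real (Suc (nat \<lfloor>R\<rfloor>)) \<le> real (length p)" if "U p = Some (codeV \<sigma>)" for p
    using that by (meson not_less_eq_eq of_nat_le_iff)
  then have "ereal (real (Suc (nat \<lfloor>R\<rfloor>))) \<le> Kc U codeV \<sigma>"
    unfolding Kc_def by (intro INF_greatest) auto
  moreover have "R < real (Suc (nat \<lfloor>R\<rfloor>))" by linarith
  ultimately show False using assms by (metis ereal_less_eq(3) leD order_trans)
qed

lemma finite_Kc_le:
  assumes "inj_on codeV A"
  shows "finite {\<sigma>\<in>A. Kc U codeV \<sigma> \<le> ereal R}"
proof -
  let ?S = "{\<sigma>\<in>A. Kc U codeV \<sigma> \<le> ereal R}"
  have "codeV ` ?S \<subseteq> (\<lambda>p. the (U p)) ` {p. set p \<subseteq> UNIV \<and> length p \<le> nat \<lfloor>R\<rfloor>}"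
  proof
    fix y assume "y \<in> codeV ` ?S"
    then obtain \<sigma> where "y = codeV \<sigma>" "Kc U codeV \<sigma> \<le> ereal R" by blast
    then show "y \<in> (\<lambda>p. the (U p)) ` {p. set p \<subseteq> UNIV \<and> length p \<le> nat \<lfloor>R\<rfloor>}"
      by (metis (mono_tags, lifting) Kc_le_imp_short_program image_eqI mem_Collect_eq
          option.sel top_greatest)
  qed
  then have "finite (codeV ` ?S)"
    by (rule finite_subset) (rule finite_imageI, rule finite_lists_length_le, simp)
  then show ?thesis
    using assms by (metis (no_types, lifting) finite_imageD inj_on_subset mem_Collect_eq subsetI)
qed

lemma algebraic_if_rational_parts:
  fixes z :: complex
  assumes "Re z \<in> \<rat>" "Im z \<in> \<rat>"
  shows "algebraic z"
proof (rule algebraicI')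
  let ?p = "[:of_real (Re z ^ 2 + Im z ^ 2), - 2 * of_real (Re z), 1:] :: complex poly"
  show "?p \<noteq> 0" by simp
  show "coeff ?p i \<in> \<rat>" for i
    using assms by (auto simp: coeff_pCons split: nat.split)
  show "poly ?p z = 0"
    by (simp add: complex_eq_iff power2_eq_square algebra_simps)
qed

text \<open>The rational points of the unit circle, parametrised by stereographic projection.\<close>
definition circle_point :: "nat \<Rightarrow> complex" where
  "circle_point t = Complex ((real t ^ 2 - 1) / (real t ^ 2 + 1)) (2 * real t / (real t ^ 2 + 1))"

lemma circle_point_denom_pos: "real t ^ 2 + 1 > 0"
  by (simp add: add_nonneg_pos)

lemma algebraic_circle_point: "algebraic (circle_point t)"
  unfolding circle_point_def by (rule algebraic_if_rational_parts) (simp_all add: Rats_divide)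

lemma circle_point_unimodular: "cnj (circle_point t) * circle_point t = 1"
proof -
  define d where "d = real t ^ 2 + 1"
  have "d > 0" unfolding d_def by (rule circle_point_denom_pos)
  have "((real t ^ 2 - 1) / d)^2 + (2 * real t / d)^2 = ((real t ^ 2 - 1)^2 + (2 * real t)^2) / d^2"
    by (simp add: power_divide add_divide_distrib)
  also have "(real t ^ 2 - 1)^2 + (2 * real t)^2 = d^2"
    unfolding d_def by (simp add: power2_eq_square algebra_simps)
  also have "d^2 / d^2 = 1"
    using \<open>d > 0\<close> by simp
  finally show ?thesis
    by (simp add: circle_point_def complex_eq_iff d_def power2_eq_square)
qed

lemma inj_circle_point: "inj circle_point"
proof (rule injI)
  fix s t assume "circle_point s = circle_point t"
  then have "(real s ^ 2 - 1) / (real s ^ 2 + 1) = (real t ^ 2 - 1) / (real t ^ 2 + 1)"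
    unfolding circle_point_def by simp
  then have "real s ^ 2 = real t ^ 2"
    using circle_point_denom_pos[of s] circle_point_denom_pos[of t]
    by (simp add: frac_eq_eq algebra_simps)
  then show "s = t" by simp
qed

lemma infinite_unit_alg_vecs: "infinite {\<sigma>. alg_vec n \<sigma> \<and> cinner \<sigma> \<sigma> = 1}"
proof -
  define vec where "vec t = circle_point t # replicate (2 ^ n - 1) 0" for t
  have "length (vec t) = 2 ^ n" for t
    unfolding vec_def by simp
  then have "alg_vec n (vec t)" for t
    unfolding alg_vec_def vec_def using algebraic_circle_point[of t] by auto
  moreover have "cinner (vec t) (vec t) = 1" for t
  proof -
    obtain m where m: "(2::nat) ^ n = Suc m"
      by (meson gr0_implies_Suc zero_less_numeral zero_less_power)
    then show ?thesis
      by (simp add: cinner_def vec_def sum.lessThan_Suc_shift circle_point_unimodular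
          del: sum.lessThan_Suc)
  qed
  moreover have "inj vec"
    using inj_circle_point unfolding vec_def inj_def by simp
  ultimately have "range vec \<subseteq> {\<sigma>. alg_vec n \<sigma> \<and> cinner \<sigma> \<sigma> = 1}"
    by blast
  moreover have "infinite (range vec)"
    using \<open>inj vec\<close> by (rule range_inj_infinite)
  ultimately show ?thesis
    using infinite_super by blast
qed

definition basis_vec :: "nat \<Rightarrow> nat \<Rightarrow> complex list" where
  "basis_vec n i = map (\<lambda>j. if j = i then 1 else 0) [0..<2 ^ n]"

definition std_basis :: "nat \<Rightarrow> complex list set" where
  "std_basis n = basis_vec n ` {..<2 ^ n}"

lemma length_basis_vec [simp]: "length (basis_vec n i) = 2 ^ n"
  unfolding basis_vec_def by simp

lemma nth_basis_vec: "j < 2 ^ n \<Longrightarrow> basis_vec n i ! j = (if j = i then 1 else 0)"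
  unfolding basis_vec_def by simp

lemma cinner_basis_vec:
  assumes "i < 2 ^ n"
  shows "cinner (basis_vec n i) (basis_vec n j) = (if i = j then 1 else 0)"
proof -
  have "cinner (basis_vec n i) (basis_vec n j) = (\<Sum>l<2 ^ n. if l = i then (if i = j then 1 else 0) else 0)"
    unfolding cinner_def by (intro sum.cong) (auto simp: nth_basis_vec)
  then show ?thesis using assms by simp
qed

lemma inj_on_basis_vec: "inj_on (basis_vec n) {..<2 ^ n}"
  by (rule inj_onI) (metis cinner_basis_vec lessThan_iff zero_neq_one)

lemma qform_outer_basis_vec:
  assumes "i < 2 ^ n" "length \<sigma> = 2 ^ n"
  shows "qform (outer \<sigma>) (basis_vec n i) = \<sigma> ! i * cnj (\<sigma> ! i)"
proof -
  have "qform (outer \<sigma>) (basis_vec n i) =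
      (\<Sum>a<2 ^ n. \<Sum>b<2 ^ n. if a = i \<and> b = i then \<sigma> ! i * cnj (\<sigma> ! i) else 0)"
    unfolding qform_def outer_def by (intro sum.cong) (auto simp: nth_basis_vec)
  also have "\<dots> = (\<Sum>a<2 ^ n. if a = i then \<sigma> ! i * cnj (\<sigma> ! i) else 0)"
    using assms by (intro sum.cong) auto
  also have "\<dots> = \<sigma> ! i * cnj (\<sigma> ! i)"
    using assms by simp
  finally show ?thesis .
qed

lemma sum_qform_outer_std_basis:
  assumes "length \<sigma> = 2 ^ n"
  shows "(\<Sum>v\<in>std_basis n. qform (outer \<sigma>) v) = cinner \<sigma> \<sigma>"
proof -
  have "(\<Sum>v\<in>std_basis n. qform (outer \<sigma>) v) = (\<Sum>i<2 ^ n. qform (outer \<sigma>) (basis_vec n i))"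
    unfolding std_basis_def by (simp add: sum.reindex inj_on_basis_vec)
  also have "\<dots> = cinner \<sigma> \<sigma>"
    using assms by (simp add: cinner_def qform_outer_basis_vec mult.commute)
  finally show ?thesis .
qed

lemma orthonormal_std_basis: "orthonormal_set (std_basis n)"
  unfolding orthonormal_set_def std_basis_def
  using cinner_basis_vec inj_on_basis_vec by (auto simp: inj_on_def)

lemma alg_vec_std_basis: "std_basis n \<subseteq> {v. alg_vec n v}"
  unfolding std_basis_def alg_vec_def basis_vec_def by auto

lemma Kc_unbounded_on_unit_alg_vecs:
  assumes "inj_on codeV {v. \<forall>x\<in>set v. algebraic x}"
  obtains \<sigma> where "alg_vec n \<sigma>" "cinner \<sigma> \<sigma> = 1" "Kc U codeV \<sigma> > ereal R"
proof -
  have "\<not> {\<sigma>. alg_vec n \<sigma> \<and> cinner \<sigma> \<sigma> = 1}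
      \<subseteq> {\<sigma>\<in>{v. \<forall>x\<in>set v. algebraic x}. Kc U codeV \<sigma> \<le> ereal R}"
    using finite_Kc_le[OF assms] infinite_unit_alg_vecs by (meson finite_subset)
  then obtain \<sigma> where "alg_vec n \<sigma>" "cinner \<sigma> \<sigma> = 1" "\<not> Kc U codeV \<sigma> \<le> ereal R"
    by (auto simp: alg_vec_def)
  then show thesis
    using that by (simp add: not_le)
qed

lemma QK_bounded_on_pure_states:
  assumes "universal_pf_machine U" "\<epsilon> < 1"
  obtains B where "\<And>\<sigma>. alg_vec n \<sigma> \<Longrightarrow> cinner \<sigma> \<sigma> = 1 \<Longrightarrow> QK U codeF \<epsilon> n (outer \<sigma>) \<le> ereal B"
proof -
  obtain p where p: "U p = Some (codeF (std_basis n))"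
    using universal_pf_machine_outputs[OF assms(1)] .
  show thesis
  proof (rule that)
    fix \<sigma> assume "alg_vec n \<sigma>" "cinner \<sigma> \<sigma> = 1"
    then have "Re (\<Sum>v\<in>std_basis n. qform (outer \<sigma>) v) > \<epsilon>"
      using assms(2) by (simp add: alg_vec_def sum_qform_outer_std_basis)
    then have "(p, std_basis n) \<in> {(p, F). U p = Some (codeF F) \<and> finite F
        \<and> F \<subseteq> {v. alg_vec n v} \<and> orthonormal_set F \<and> Re (\<Sum>v\<in>F. qform (outer \<sigma>) v) > \<epsilon>}"
      using p orthonormal_std_basis alg_vec_std_basis by (simp add: std_basis_def)
    then show "QK U codeF \<epsilon> n (outer \<sigma>)
        \<le> ereal (real (length p) + log 2 (real (card (std_basis n))))"
      unfolding QK_def by (rule INF_lower2) simp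
  qed
qed

theorem mainTheorem6:
  fixes U :: "bool list \<Rightarrow> nat option"
    and codeV :: "complex list \<Rightarrow> nat"
    and codeF :: "complex list set \<Rightarrow> nat"
    and \<epsilon> :: real and n :: nat
  assumes U: "universal_pf_machine U"
    and codeV: "inj_on codeV {v. \<forall>x\<in>set v. algebraic x}"
    and codeF: "inj_on codeF {F. finite F \<and> (\<forall>v\<in>F. \<forall>x\<in>set v. algebraic x)}"
    and eps: "0 < \<epsilon>" "\<epsilon> < 1"
  shows "\<not> (\<exists>c::real. \<forall>\<sigma>. alg_vec n \<sigma> \<and> cinner \<sigma> \<sigma> = 1 \<longrightarrow>
             QK U codeF \<epsilon> n (outer \<sigma>) \<ge> Kc U codeV \<sigma> - ereal c)
         \<and> \<not> (\<exists>c::real. \<forall>\<sigma>. alg_vec n \<sigma> \<and> cinner \<sigma> \<sigma> = 1 \<longrightarrow>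
             QK U codeF \<epsilon> n (outer \<sigma>) \<le> Kc U codeV \<sigma> + ereal c \<and>
             Kc U codeV \<sigma> \<le> QK U codeF \<epsilon> n (outer \<sigma>) + ereal c)"
proof -
  obtain B where B: "\<And>\<sigma>. alg_vec n \<sigma> \<Longrightarrow> cinner \<sigma> \<sigma> = 1 \<Longrightarrow> QK U codeF \<epsilon> n (outer \<sigma>) \<le> ereal B"
    using QK_bounded_on_pure_states[OF U eps(2)] by blast
  have no_lower_bound: "\<not> (\<exists>c::real. \<forall>\<sigma>. alg_vec n \<sigma> \<and> cinner \<sigma> \<sigma> = 1 \<longrightarrow>
      QK U codeF \<epsilon> n (outer \<sigma>) \<ge> Kc U codeV \<sigma> - ereal c)"
  proof
    assume "\<exists>c::real. \<forall>\<sigma>. alg_vec n \<sigma> \<and> cinner \<sigma> \<sigma> = 1 \<longrightarrow>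
        QK U codeF \<epsilon> n (outer \<sigma>) \<ge> Kc U codeV \<sigma> - ereal c"
    then obtain c where c: "\<And>\<sigma>. alg_vec n \<sigma> \<Longrightarrow> cinner \<sigma> \<sigma> = 1 \<Longrightarrow>
        Kc U codeV \<sigma> - ereal c \<le> QK U codeF \<epsilon> n (outer \<sigma>)"
      by blast
    obtain \<sigma> where \<sigma>: "alg_vec n \<sigma>" "cinner \<sigma> \<sigma> = 1" "Kc U codeV \<sigma> > ereal (B + c)"
      using Kc_unbounded_on_unit_alg_vecs[OF codeV] .
    have "Kc U codeV \<sigma> - ereal c \<le> ereal B"
      using c[OF \<sigma>(1,2)] B[OF \<sigma>(1,2)] by (rule order_trans)
    then show False
      using \<sigma>(3) by (simp add: ereal_minus_le)
  qed
  show ?thesis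
  proof (intro conjI no_lower_bound notI)
    assume "\<exists>c::real. \<forall>\<sigma>. alg_vec n \<sigma> \<and> cinner \<sigma> \<sigma> = 1 \<longrightarrow>
        QK U codeF \<epsilon> n (outer \<sigma>) \<le> Kc U codeV \<sigma> + ereal c \<and>
        Kc U codeV \<sigma> \<le> QK U codeF \<epsilon> n (outer \<sigma>) + ereal c"
    then have "\<exists>c::real. \<forall>\<sigma>. alg_vec n \<sigma> \<and> cinner \<sigma> \<sigma> = 1 \<longrightarrow>
        QK U codeF \<epsilon> n (outer \<sigma>) \<ge> Kc U codeV \<sigma> - ereal c"
      by (metis ereal_minus_le abs_ereal.simps(1) PInfty_neq_ereal(1))
    with no_lower_bound show False ..
  qed
qed

end
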